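(* Let $p$ be an integer with $1\le p\le13$ and let $\eta\in\mathbf P^p([-1,1])$ with $\eta(-1)=0$ and $\eta\not\equiv0$. Let $S(\eta)$ be the unique maximizer of $\phi\mapsto J(\phi;\eta)=\int_{-1}^1\big(\eta\phi-\frac14(\eta-\phi)^2\big)dx$ over $\{\phi\in\mathbf P^{p-1}([-1,1]):\phi(1)=\eta(1)\}$. Then $J(S(\eta);\eta)>0$.
   Context: $\mathbf P^q([-1,1])$ denotes the real polynomials of degree at most $q$ on $[-1,1]$. The maximizer exists and is unique since $J(\cdot;\eta)$ is strictly concave and the constraint set is a nonempty affine subspace. *)

theory Defs
  imports "HOL-Analysis.Analysis" "HOL-Computational_Algebra.Polynomial"
begin

definition J :: "real poly \<Rightarrow> real poly \<Rightarrow> real" where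
  "J phi eta = integral {-1..1}
     (\<lambda>x. poly eta x * poly phi x - (1/4) * (poly eta x - poly phi x)^2)"

definition admissible :: "nat \<Rightarrow> real poly \<Rightarrow> real poly \<Rightarrow> bool" where
  "admissible p eta phi \<longleftrightarrow> degree phi \<le> p - 1 \<and> poly phi 1 = poly eta 1"

definition S :: "nat \<Rightarrow> real poly \<Rightarrow> real poly" where
  "S p eta = (THE phi. admissible p eta phi \<and>
                 (\<forall>psi. admissible p eta psi \<longrightarrow> J psi eta \<le> J phi eta))"

end

theory Submission
  imports Defs
begin

text \<open>
  With \<open>\<langle>f, g\<rangle> = \<integral>\<^sub>-\<^sub>1\<^sup>1 f g\<close> one has \<open>J(\<psi>;\<eta>) = 2\<parallel>\<eta>\<parallel>\<^sup>2 - \<parallel>\<psi> - 3\<eta>\<parallel>\<^sup>2/4\<close>, so \<open>S(\<eta>)\<close> is the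
  orthogonal projection of \<open>3\<eta>\<close> onto the admissible affine space. Write \<open>\<eta> = v + a L\<close> with
  \<open>L\<close> the Legendre polynomial of degree \<open>p\<close> and \<open>v \<in> P\<^sup>p\<^sup>-\<^sup>1\<close>, and let \<open>K\<close> be the
  reproducing kernel of \<open>P\<^sup>p\<^sup>-\<^sup>1\<close> at \<open>1\<close>. Then \<open>S(\<eta>) = 3v + \<tau> K / K(1)\<close> with
  \<open>\<tau> = a - 2v(1)\<close>, and
    \<open>J(S(\<eta>);\<eta>) = 2\<parallel>v\<parallel>\<^sup>2 - a\<^sup>2/(2(2p+1)) - \<tau>\<^sup>2/(2p\<^sup>2)\<close>.
  The condition \<open>\<eta>(-1) = 0\<close> gives \<open>a = \<plusminus>v(-1)\<close>, and testing \<open>v\<close> against the kernels at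
  \<open>\<plusminus>1\<close>, whose Gram matrix has entries \<open>p\<^sup>2/2\<close> and \<open>\<plusminus>p/2\<close>, bounds \<open>\<parallel>v\<parallel>\<^sup>2\<close> from below in terms
  of \<open>v(1)\<close> and \<open>v(-1)\<close>. Positivity then reduces to that of a binary quadratic form whose
  determinant is a positive multiple of \<open>12p\<^sup>4 - p\<^sup>5 + 22p\<^sup>3 - 4p\<^sup>2 - 21p - 8\<close>. The Legendre
  polynomials and kernels themselves are certified by exact computation of their moments.
\<close>

definition poly_inner :: "real poly \<Rightarrow> real poly \<Rightarrow> real" where
  "poly_inner f g = integral {-1..1} (\<lambda>x. poly f x * poly g x)"

definition moment :: "nat \<Rightarrow> real poly \<Rightarrow> real" where
  "moment i g = integral {-1..1} (\<lambda>x. x ^ i * poly g x)"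

definition power_integral :: "nat \<Rightarrow> real" where
  "power_integral n = (if even n then 2 / (real n + 1) else 0)"

lemma has_integral_power_integral:
  "((\<lambda>x::real. x ^ n) has_integral power_integral n) {-1..1}"
proof -
  have "((\<lambda>x::real. x ^ n) has_integral (1 ^ Suc n / Suc n - (-1) ^ Suc n / Suc n)) {-1..1}"
  proof (rule fundamental_theorem_of_calculus)
    fix x :: real
    show "((\<lambda>x. x ^ Suc n / Suc n) has_vector_derivative x ^ n) (at x within {-1..1})"
      unfolding has_real_derivative_iff_has_vector_derivative [symmetric]
      by (rule derivative_eq_intros refl | simp)+
  qed simp
  then show ?thesis
    by (auto simp: power_integral_def field_simps)
qed

lemma moment_0 [simp]: "moment i 0 = 0"
  by (simp add: moment_def)

lemma moment_pCons [simp]: "moment i (pCons a q) = a * power_integral i + moment (Suc i) q"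
proof -
  have "moment i (pCons a q) = integral {-1..1} (\<lambda>x. a * x ^ i + x ^ Suc i * poly q x)"
    unfolding moment_def by (simp add: algebra_simps)
  also have "\<dots> = a * power_integral i + moment (Suc i) q"
    unfolding moment_def
    by (subst integral_add)
       (auto intro!: integrable_continuous_interval continuous_intros
             simp: integral_unique [OF has_integral_power_integral])
  finally show ?thesis .
qed

lemma moment_reflect: "moment i (pcompose g [:0, -1:]) = (-1) ^ i * moment i g"
proof -
  define f where "f = (\<lambda>y::real. (-1) ^ i * (y ^ i * poly g y))"
  have "x ^ i * poly (pcompose g [:0, -1:]) x = f (-x)" for x :: real
    by (simp add: f_def poly_pcompose mult.assoc [symmetric] flip: power_mult_distrib)
  then have "moment i (pcompose g [:0, -1:]) = integral {-1..1} (\<lambda>x. f (-x))"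
    by (simp add: moment_def)
  also have "\<dots> = integral {-1..1} f"
    using Henstock_Kurzweil_Integration.integral_reflect_real [of 1 "-1" f] by simp
  finally show ?thesis
    by (simp add: f_def moment_def)
qed

lemma poly_inner_commute: "poly_inner f g = poly_inner g f"
  unfolding poly_inner_def by (simp add: mult.commute)

lemma poly_inner_add_left: "poly_inner (f + g) h = poly_inner f h + poly_inner g h"
  unfolding poly_inner_def
  by (subst integral_add [symmetric])
     (auto intro!: integrable_continuous_interval continuous_intros simp: distrib_right)

lemma poly_inner_diff_left: "poly_inner (f - g) h = poly_inner f h - poly_inner g h"
  unfolding poly_inner_def
  by (subst integral_diff [symmetric])
     (auto intro!: integrable_continuous_interval continuous_intros simp: left_diff_distrib)

lemma poly_inner_smult_left: "poly_inner (smult c f) h = c * poly_inner f h"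
  unfolding poly_inner_def by (simp add: mult.assoc)

lemma poly_inner_add_right: "poly_inner h (f + g) = poly_inner h f + poly_inner h g"
  by (metis poly_inner_commute poly_inner_add_left)

lemma poly_inner_diff_right: "poly_inner h (f - g) = poly_inner h f - poly_inner h g"
  by (metis poly_inner_commute poly_inner_diff_left)

lemma poly_inner_smult_right: "poly_inner h (smult c f) = c * poly_inner h f"
  by (metis poly_inner_commute poly_inner_smult_left)

lemmas poly_inner_simps =
  poly_inner_add_left poly_inner_diff_left poly_inner_smult_left
  poly_inner_add_right poly_inner_diff_right poly_inner_smult_right

lemma poly_inner_self_nonneg: "0 \<le> poly_inner f f"
  unfolding poly_inner_def
  by (rule integral_nonneg) (auto intro!: integrable_continuous_interval continuous_intros)

lemma poly_inner_self_eq_0_iff: "poly_inner f f = 0 \<longleftrightarrow> f = 0"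
proof
  assume "poly_inner f f = 0"
  then have "\<forall>x\<in>{-1..1::real}. poly f x * poly f x = 0"
    unfolding poly_inner_def
    by (subst (asm) integral_eq_0_iff) (auto intro!: continuous_intros)
  then have "{-1..1::real} \<subseteq> {x. poly f x = 0}"
    by auto
  moreover have "infinite {-1..1::real}"
    by (simp add: infinite_Icc)
  ultimately have "infinite {x. poly f x = 0}"
    using finite_subset by blast
  then show "f = 0"
    using poly_roots_finite by blast
qed (simp add: poly_inner_def)

lemma poly_inner_self_ge: "2 * poly_inner f g - poly_inner g g \<le> poly_inner f f"
  using poly_inner_self_nonneg [of "f - g"]
  by (simp add: poly_inner_simps poly_inner_commute [of g f])

lemma poly_eq_sum_lessThan:
  fixes v :: "'a::comm_semiring_1 poly"
  assumes "degree v < n"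
  shows "poly v x = (\<Sum>i<n. coeff v i * x ^ i)"
proof -
  have "poly v x = (\<Sum>i\<le>degree v. coeff v i * x ^ i)"
    by (rule poly_altdef)
  also have "\<dots> = (\<Sum>i<n. coeff v i * x ^ i)"
    by (rule sum.mono_neutral_left) (use assms in \<open>auto simp: coeff_eq_0\<close>)
  finally show ?thesis .
qed

lemma poly_inner_eq_sum_moments:
  assumes "degree v < n"
  shows "poly_inner v g = (\<Sum>i<n. coeff v i * moment i g)"
proof -
  have "poly_inner v g = integral {-1..1} (\<lambda>x. \<Sum>i<n. coeff v i * (x ^ i * poly g x))"
    unfolding poly_inner_def poly_eq_sum_lessThan [OF assms]
    by (simp add: sum_distrib_right mult.assoc)
  also have "\<dots> = (\<Sum>i<n. coeff v i * moment i g)"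
    unfolding moment_def
    by (subst integral_sum) (auto intro!: integrable_continuous_interval continuous_intros)
  finally show ?thesis .
qed

lemma poly_inner_orthogonal:
  assumes "degree v < n" "\<forall>i<n. moment i g = 0"
  shows "poly_inner v g = 0"
  using assms by (simp add: poly_inner_eq_sum_moments)

lemma poly_inner_reproducing:
  assumes "degree v < n" "\<forall>i<n. moment i K = x0 ^ i"
  shows "poly_inner v K = poly v x0"
  using assms by (simp add: poly_inner_eq_sum_moments poly_eq_sum_lessThan)

lemma poly_inner_self_eq_top_moment:
  assumes "degree g \<le> n" "\<forall>i<n. moment i g = 0"
  shows "poly_inner g g = coeff g n * moment n g"
  using assms by (simp add: poly_inner_eq_sum_moments [of g "Suc n"])

lemma J_eq_poly_inner:
  "J psi eta = 2 * poly_inner eta eta - poly_inner (psi - smult 3 eta) (psi - smult 3 eta) / 4"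
proof -
  have "J psi eta = integral {-1..1} (\<lambda>x. 2 * (poly eta x * poly eta x)
      - poly (psi - smult 3 eta) x * poly (psi - smult 3 eta) x / 4)"
    unfolding J_def by (rule integral_cong) (simp add: field_simps power2_eq_square)
  also have "\<dots> = 2 * poly_inner eta eta - poly_inner (psi - smult 3 eta) (psi - smult 3 eta) / 4"
    unfolding poly_inner_def
    by (subst integral_diff) (auto intro!: integrable_continuous_interval continuous_intros)
  finally show ?thesis .
qed

lemma S_eqI:
  assumes adm: "admissible p eta phi"
    and orth: "\<And>d. degree d \<le> p - 1 \<Longrightarrow> poly d 1 = 0 \<Longrightarrow> poly_inner d (phi - smult 3 eta) = 0"
  shows "S p eta = phi"
proof -
  have J_less: "J psi eta < J phi eta" if "admissible p eta psi" "psi \<noteq> phi" for psi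
  proof -
    define d where "d = psi - phi"
    have "degree d \<le> p - 1" "poly d 1 = 0"
      using that(1) adm degree_diff_le [of psi "p - 1" phi] by (auto simp: admissible_def d_def)
    then have d_orth: "poly_inner d (phi - smult 3 eta) = 0"
      by (rule orth)
    have "psi - smult 3 eta = d + (phi - smult 3 eta)"
      by (simp add: d_def)
    then have "poly_inner (psi - smult 3 eta) (psi - smult 3 eta)
        = poly_inner d d + poly_inner (phi - smult 3 eta) (phi - smult 3 eta)"
      using d_orth poly_inner_commute [of "phi - smult 3 eta" d]
      by (simp only: poly_inner_add_left poly_inner_add_right)
    then have "J psi eta = J phi eta - poly_inner d d / 4"
      unfolding J_eq_poly_inner by (simp add: field_simps)
    moreover have "0 < poly_inner d d"
      using poly_inner_self_nonneg [of d] poly_inner_self_eq_0_iff [of d] that(2)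
      by (simp add: d_def)
    ultimately show ?thesis
      by simp
  qed
  show ?thesis
    unfolding S_def
    by (rule the_equality) (use adm J_less in \<open>force+\<close>)
qed

lemma quadratic_form_pos:
  fixes a b c x y :: real
  assumes "0 < a" "0 < a * c - b\<^sup>2" "x \<noteq> 0 \<or> y \<noteq> 0"
  shows "0 < a * x\<^sup>2 + 2 * b * x * y + c * y\<^sup>2"
proof -
  have "a * (a * x\<^sup>2 + 2 * b * x * y + c * y\<^sup>2) = (a * x + b * y)\<^sup>2 + (a * c - b\<^sup>2) * y\<^sup>2"
    by (simp add: algebra_simps power2_eq_square)
  moreover have "0 < (a * x + b * y)\<^sup>2 + (a * c - b\<^sup>2) * y\<^sup>2"
  proof (cases "y = 0")
    case True
    with assms show ?thesis
      by simp
  next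
    case False
    with assms(2) show ?thesis
      by (intro add_nonneg_pos) simp_all
  qed
  ultimately show ?thesis
    using assms(1) by (metis zero_less_mult_pos)
qed

lemma ge_max_concave_quadratic:
  fixes P X x c :: real
  assumes "1 < P"
    and bound: "\<And>\<alpha> \<beta>. 2 * \<alpha> * x + 2 * \<beta> * c - (\<alpha>\<^sup>2 + \<beta>\<^sup>2) * P\<^sup>2 / 2 + \<alpha> * \<beta> * P \<le> X"
  shows "2 * (P * x\<^sup>2 + 2 * x * c + P * c\<^sup>2) \<le> X * (P * (P\<^sup>2 - 1))"
proof -
  define D where "D = P * (P\<^sup>2 - 1)"
  define M where "M = P * x\<^sup>2 + 2 * x * c + P * c\<^sup>2"
  define k where "k = 2 / D"
  have "1 * 1 < P * P"
    using assms(1) by (intro mult_strict_mono) auto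
  then have D_pos: "0 < D"
    using assms(1) by (simp add: D_def power2_eq_square)
  have quadratic: "P\<^sup>2 * ((x * P + c)\<^sup>2 + (c * P + x)\<^sup>2) - 2 * P * ((x * P + c) * (c * P + x)) = D * M"
    by (simp add: D_def M_def power2_eq_square algebra_simps)
  \<comment> \<open>the maximum is attained at \<open>(\<alpha>, \<beta>) = k (x P + c, c P + x)\<close>\<close>
  have "2 * (k * (x * P + c)) * x + 2 * (k * (c * P + x)) * c
      - ((k * (x * P + c))\<^sup>2 + (k * (c * P + x))\<^sup>2) * P\<^sup>2 / 2 + (k * (x * P + c)) * (k * (c * P + x)) * P
      = 2 * k * M - k\<^sup>2 / 2 * (P\<^sup>2 * ((x * P + c)\<^sup>2 + (c * P + x)\<^sup>2) - 2 * P * ((x * P + c) * (c * P + x)))"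
    by (simp add: M_def power2_eq_square field_simps)
  also have "\<dots> = 2 * M / D"
    unfolding quadratic k_def using D_pos by (simp add: power2_eq_square field_simps)
  finally have "2 * M / D \<le> X"
    using bound [of "k * (x * P + c)" "k * (c * P + x)"] by simp
  then show ?thesis
    using D_pos by (simp add: D_def M_def pos_divide_le_eq mult.commute)
qed

text \<open>The polynomial below is negative at \<open>p = 14\<close>; this is the only place where \<open>p \<le> 13\<close> is used.\<close>

lemma legendre_determinant_pos:
  fixes p :: nat
  assumes "2 \<le> p" "p \<le> 13"
  shows "0 < 12 * real p ^ 4 - real p ^ 5 + 22 * real p ^ 3 - 4 * real p ^ 2 - 21 * real p - 8"
proof -
  have "p = 2 \<or> p = 3 \<or> p = 4 \<or> p = 5 \<or> p = 6 \<or> p = 7 \<or> p = 8 \<or> p = 9 \<or> p = 10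
      \<or> p = 11 \<or> p = 12 \<or> p = 13"
    using assms by presburger
  then show ?thesis
    by (elim disjE) simp_all
qed

lemma legendre_form_pos:
  fixes x c :: real and p :: nat
  assumes "2 \<le> p" "p \<le> 13" "x \<noteq> 0 \<or> c \<noteq> 0"
  defines "P \<equiv> real p"
  defines "E \<equiv> P\<^sup>2 - 1" and "F \<equiv> 2 * P + 1"
  shows "c\<^sup>2 * P\<^sup>2 * E + (c + 2 * x)\<^sup>2 * E * F < 8 * P * F * (P * x\<^sup>2 + 2 * x * c + P * c\<^sup>2)"
proof -
  define a11 where "a11 = 4 * F * (P\<^sup>2 + 1)"
  define a12 where "a12 = 2 * F * (4 * P + 1 - P\<^sup>2)"
  define a22 where "a22 = 8 * P\<^sup>2 * F - P\<^sup>2 * E - E * F"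
  have P: "2 \<le> P"
    using assms(1) by (simp add: P_def)
  then have F_pos: "0 < F"
    by (simp add: F_def)
  have "0 < P\<^sup>2 + 1"
    using zero_le_power2 [of P] by linarith
  with F_pos have "0 < a11"
    by (simp add: a11_def)
  moreover have "a11 * a22 - a12\<^sup>2 = 4 * F * P * (12 * P ^ 4 - P ^ 5 + 22 * P ^ 3 - 4 * P\<^sup>2 - 21 * P - 8)"
    by (simp add: a11_def a12_def a22_def E_def F_def eval_nat_numeral algebra_simps)
  then have "0 < a11 * a22 - a12\<^sup>2"
    using F_pos P legendre_determinant_pos [OF assms(1,2)] by (simp add: P_def)
  ultimately have "0 < a11 * x\<^sup>2 + 2 * a12 * x * c + a22 * c\<^sup>2"
    using assms(3) by (rule quadratic_form_pos)
  also have "a11 * x\<^sup>2 + 2 * a12 * x * c + a22 * c\<^sup>2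
      = 8 * P * F * (P * x\<^sup>2 + 2 * x * c + P * c\<^sup>2) - c\<^sup>2 * P\<^sup>2 * E - (c + 2 * x)\<^sup>2 * E * F"
    by (simp add: a11_def a12_def a22_def E_def F_def power2_eq_square algebra_simps)
  finally show ?thesis
    by linarith
qed

lemma reduced_objective_pos_ge2:
  fixes X x c :: real and p :: nat
  assumes "2 \<le> p" "p \<le> 13" "0 < X"
    and bound: "\<And>\<alpha> \<beta>. 2 * \<alpha> * x + 2 * \<beta> * c - (\<alpha>\<^sup>2 + \<beta>\<^sup>2) * real p ^ 2 / 2 + \<alpha> * \<beta> * real p \<le> X"
  shows "0 < 2 * X - c\<^sup>2 / (2 * (2 * real p + 1)) - (c + 2 * x)\<^sup>2 / (2 * real p ^ 2)"
proof -
  define P where "P = real p"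
  define E where "E = P\<^sup>2 - 1"
  define F where "F = 2 * P + 1"
  define M where "M = P * x\<^sup>2 + 2 * x * c + P * c\<^sup>2"
  have P: "2 \<le> P"
    using assms(1) by (simp add: P_def)
  have "2 * 2 \<le> P * P"
    using P by (intro mult_mono) auto
  then have "0 < E" "0 < F"
    using P by (simp_all add: E_def F_def power2_eq_square)
  then have EF_pos: "0 < 2 * P\<^sup>2 * E * F"
    using P by simp
  have "2 * M \<le> X * (P * E)"
    unfolding M_def E_def P_def by (rule ge_max_concave_quadratic) (use P bound in \<open>auto simp: P_def\<close>)
  then have scaled: "8 * P * F * M \<le> 4 * P\<^sup>2 * E * F * X"
    using mult_left_mono [of "2 * M" "X * (P * E)" "4 * P * F"] P by (simp add: F_def power2_eq_square algebra_simps)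
  have "c\<^sup>2 * P\<^sup>2 * E + (c + 2 * x)\<^sup>2 * E * F < 4 * P\<^sup>2 * E * F * X"
  proof (cases "x = 0 \<and> c = 0")
    case True
    with assms(3) EF_pos show ?thesis
      by simp
  next
    case False
    with legendre_form_pos [OF assms(1,2), of x c] scaled show ?thesis
      unfolding P_def E_def F_def M_def by linarith
  qed
  also have "c\<^sup>2 * P\<^sup>2 * E + (c + 2 * x)\<^sup>2 * E * F
      = (c\<^sup>2 / (2 * F) + (c + 2 * x)\<^sup>2 / (2 * P\<^sup>2)) * (2 * P\<^sup>2 * E * F)"
    using P \<open>0 < F\<close> by (simp add: field_simps power2_eq_square)
  finally have "(c\<^sup>2 / (2 * F) + (c + 2 * x)\<^sup>2 / (2 * P\<^sup>2)) * (2 * P\<^sup>2 * E * F) < (2 * X) * (2 * P\<^sup>2 * E * F)"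
    by (simp add: algebra_simps)
  then have "c\<^sup>2 / (2 * F) + (c + 2 * x)\<^sup>2 / (2 * P\<^sup>2) < 2 * X"
    using EF_pos by (rule mult_less_cancel_right_pos [THEN iffD1, rotated])
  then show ?thesis
    by (simp add: F_def P_def)
qed

lemma reduced_objective_pos:
  fixes X x c :: real and p :: nat
  assumes "1 \<le> p" "p \<le> 13" "0 < X"
    and bound: "\<And>\<alpha> \<beta>. 2 * \<alpha> * x + 2 * \<beta> * c - (\<alpha>\<^sup>2 + \<beta>\<^sup>2) * real p ^ 2 / 2 + \<alpha> * \<beta> * real p \<le> X"
  shows "0 < 2 * X - c\<^sup>2 / (2 * (2 * real p + 1)) - (c + 2 * x)\<^sup>2 / (2 * real p ^ 2)"
proof (cases "p = 1")
  case True
  \<comment> \<open>here the Gram matrix of the kernels at \<open>\<plusminus>1\<close> is singular\<close>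
  have along_diagonal: "2 * t * (x + c) \<le> X" for t
    using bound [of t t] True by (simp add: power2_eq_square algebra_simps)
  have "x + c = 0"
  proof (rule ccontr)
    assume "x + c \<noteq> 0"
    then have "2 * ((X + 1) / (2 * (x + c))) * (x + c) = X + 1"
      by (simp add: field_simps)
    with along_diagonal [of "(X + 1) / (2 * (x + c))"] show False
      by simp
  qed
  then have "x = - c"
    by simp
  then have "(c + 2 * x)\<^sup>2 = c\<^sup>2"
    by (simp add: power2_eq_square)
  moreover have "2 * c\<^sup>2 \<le> X"
    using bound [of 0 "2 * c"] True by (simp add: power2_eq_square)
  ultimately show ?thesis
    using True assms(3) by simp
next
  case False
  with assms show ?thesis
    by (intro reduced_objective_pos_ge2) auto
qed

lemma All_less_numeral:
  "(\<forall>i < numeral n. P i) \<longleftrightarrow> P (pred_numeral n) \<and> (\<forall>i < pred_numeral n. P i)"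
  by (simp add: numeral_eq_Suc All_less_Suc)

lemma coeff_pCons_numeral: "coeff (pCons a q) (numeral n) = coeff q (pred_numeral n)"
  by (simp add: numeral_eq_Suc)

text \<open>\<open>L\<close> is the Legendre polynomial of degree \<open>p\<close> and \<open>K = \<Sum>k<p. (2k+1)/2 \<cdot> L\<^sub>k\<close> is the
  reproducing kernel of \<open>P\<^sup>p\<^sup>-\<^sup>1\<close> at \<open>1\<close>.\<close>

locale legendre_data =
  fixes p :: nat and L K :: "real poly"
  assumes p_pos: "1 \<le> p"
    and degree_L: "degree L = p"
    and moments_L: "\<forall>i<p. moment i L = 0"
    and moment_top_L: "coeff L p * moment p L = 2 / (2 * real p + 1)"
    and poly_L_one: "poly L 1 = 1"
    and poly_L_minus_one: "poly L (-1) = (-1) ^ p"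
    and degree_K: "degree K < p"
    and moments_K: "\<forall>i<p. moment i K = 1"
    and poly_K_one: "poly K 1 = real p ^ 2 / 2"
    and poly_K_minus_one: "poly K (-1) = (-1) ^ (p - 1) * real p / 2"
begin

lemma inner_L_L: "poly_inner L L = 2 / (2 * real p + 1)"
  using poly_inner_self_eq_top_moment [of L p] degree_L moments_L moment_top_L by simp

lemma inner_L: "degree v < p \<Longrightarrow> poly_inner v L = 0"
  using poly_inner_orthogonal moments_L by blast

lemma inner_K: "degree v < p \<Longrightarrow> poly_inner v K = poly v 1"
  using poly_inner_reproducing [of v p K 1] moments_K by simp

lemma legendre_decomposition:
  assumes "degree eta \<le> p"
  obtains v a where "degree v < p" "eta = v + smult a L"
proof -
  define a where "a = coeff eta p / coeff L p"
  define v where "v = eta - smult a L"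
  have "L \<noteq> 0"
    using degree_L p_pos by auto
  then have "coeff L p \<noteq> 0"
    using degree_L by (metis leading_coeff_0_iff)
  then have top: "coeff v p = 0"
    by (simp add: v_def a_def)
  have "degree v \<le> p"
    unfolding v_def using assms degree_L by (intro degree_diff_le) auto
  then have "coeff v i = 0" if "p - 1 < i" for i
    using top that p_pos coeff_eq_0 [of v i] by (cases "i = p") auto
  then have "degree v \<le> p - 1"
    by (intro degree_le) auto
  then have "degree v < p"
    using p_pos by linarith
  moreover have "eta = v + smult a L"
    by (simp add: v_def)
  ultimately show thesis
    by (rule that)
qed

lemma S_eq:
  fixes a :: real
  assumes v: "degree v < p"
  shows "S p (v + smult a L) = smult 3 v + smult (2 * (a - 2 * poly v 1) / real p ^ 2) K"
    (is "_ = ?phi")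
proof (rule S_eqI)
  have "0 < real p"
    using p_pos by simp
  then have "poly ?phi 1 = poly (v + smult a L) 1"
    by (simp add: poly_K_one poly_L_one field_simps)
  moreover have "degree ?phi \<le> p - 1"
    using v degree_K by (intro degree_add_le order.trans [OF degree_smult_le]) auto
  ultimately show "admissible p (v + smult a L) ?phi"
    by (simp add: admissible_def)
next
  fix d :: "real poly"
  assume "degree d \<le> p - 1" "poly d 1 = 0"
  moreover from this have "degree d < p"
    using p_pos by linarith
  moreover have "?phi - smult 3 (v + smult a L) = smult (2 * (a - 2 * poly v 1) / real p ^ 2) K - smult (3 * a) L"
    by (simp add: smult_add_right)
  ultimately show "poly_inner d (?phi - smult 3 (v + smult a L)) = 0"
    by (simp add: poly_inner_simps inner_K inner_L)
qed

lemma J_S_eq: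
  fixes a :: real
  assumes v: "degree v < p"
  defines "eta \<equiv> v + smult a L"
  shows "J (S p eta) eta
    = 2 * poly_inner v v - a\<^sup>2 / (2 * (2 * real p + 1)) - (a - 2 * poly v 1)\<^sup>2 / (2 * real p ^ 2)"
proof -
  define A where "A = real p ^ 2 / 2"
  define \<tau> where "\<tau> = a - 2 * poly v 1"
  define N where "N = 2 / (2 * real p + 1)"
  have "0 < real p"
    using p_pos by simp
  then have A_pos: "0 < A"
    by (simp add: A_def)
  have inner_K_K: "poly_inner K K = A"
    using inner_K [OF degree_K] by (simp add: poly_K_one A_def)
  have "S p eta - smult 3 eta = smult (\<tau> / A) K - smult (3 * a) L"
    by (simp add: S_eq [OF v] eta_def \<tau>_def A_def smult_add_right mult.commute)
  moreover have "poly_inner (smult (\<tau> / A) K - smult (3 * a) L) (smult (\<tau> / A) K - smult (3 * a) L)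
      = \<tau>\<^sup>2 / A + 9 * a\<^sup>2 * N"
    using inner_L [OF degree_K] poly_inner_commute [of L K] A_pos
    by (simp add: N_def poly_inner_simps inner_L_L inner_K_K power2_eq_square field_simps)
  moreover have "poly_inner eta eta = poly_inner v v + a\<^sup>2 * N"
    using inner_L [OF v] poly_inner_commute [of L v]
    by (simp add: eta_def N_def poly_inner_simps inner_L_L power2_eq_square)
  ultimately have "J (S p eta) eta = 2 * (poly_inner v v + a\<^sup>2 * N) - (\<tau>\<^sup>2 / A + 9 * a\<^sup>2 * N) / 4"
    by (simp only: J_eq_poly_inner)
  also have "\<dots> = 2 * poly_inner v v - a\<^sup>2 * N / 4 - \<tau>\<^sup>2 / (4 * A)"
    using A_pos by (simp add: field_simps)
  also have "a\<^sup>2 * N / 4 = a\<^sup>2 / (2 * (2 * real p + 1))"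
    using \<open>0 < real p\<close> by (simp add: N_def field_simps)
  also have "\<tau>\<^sup>2 / (4 * A) = \<tau>\<^sup>2 / (2 * real p ^ 2)"
    by (simp add: A_def)
  finally show ?thesis
    by (simp add: \<tau>_def)
qed

lemma inner_lower_bound:
  assumes v: "degree v < p"
  shows "2 * \<alpha> * ((-1) ^ p * poly v 1) + 2 * \<beta> * poly v (-1)
    - (\<alpha>\<^sup>2 + \<beta>\<^sup>2) * real p ^ 2 / 2 + \<alpha> * \<beta> * real p \<le> poly_inner v v"
proof -
  define K' where "K' = pcompose K [:0, -1:]"
  \<comment> \<open>the reproducing kernel at \<open>-1\<close>, by symmetry of the interval\<close>
  have degree_K': "degree K' < p"
    using degree_K by (simp add: K'_def degree_pcompose)
  have inner_K': "poly_inner u K' = poly u (-1)" if "degree u < p" for u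
    using poly_inner_reproducing [OF that, of K' "-1"] moments_K by (simp add: K'_def moment_reflect)
  obtain q where q: "p = Suc q"
    using p_pos by (cases p) auto
  define s where "s = ((-1) ^ p :: real)"
  have s: "s * s = 1" "s * poly K (-1) = - real p / 2"
    by (simp_all add: s_def q poly_K_minus_one flip: power_mult_distrib)
  define w where "w = smult (s * \<alpha>) K + smult \<beta> K'"
  have vw: "poly_inner v w = s * \<alpha> * poly v 1 + \<beta> * poly v (-1)"
    by (simp add: w_def poly_inner_simps inner_K [OF v] inner_K' [OF v])
  have ww: "poly_inner w w = (\<alpha>\<^sup>2 + \<beta>\<^sup>2) * real p ^ 2 / 2 - \<alpha> * \<beta> * real p"
  proof -
    have "poly_inner w w = (s * s) * \<alpha>\<^sup>2 * poly K 1 + 2 * \<alpha> * \<beta> * (s * poly K (-1)) + \<beta>\<^sup>2 * poly K' (-1)"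
      using inner_K [OF degree_K] inner_K [OF degree_K'] inner_K' [OF degree_K] inner_K' [OF degree_K']
        poly_inner_commute [of K' K]
      by (simp add: w_def poly_inner_simps power2_eq_square algebra_simps)
    also have "\<dots> = (\<alpha>\<^sup>2 + \<beta>\<^sup>2) * real p ^ 2 / 2 - \<alpha> * \<beta> * real p"
      using s by (simp add: K'_def poly_pcompose poly_K_one algebra_simps)
    finally show ?thesis .
  qed
  have "2 * poly_inner v w - poly_inner w w \<le> poly_inner v v"
    by (rule poly_inner_self_ge)
  then show ?thesis
    unfolding vw ww by (simp add: s_def algebra_simps)
qed

lemma J_S_pos:
  assumes "p \<le> 13" "degree eta \<le> p" "poly eta (-1) = 0" "eta \<noteq> 0"
  shows "0 < J (S p eta) eta"
proof -
  obtain v a where v: "degree v < p" and eta: "eta = v + smult a L"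
    using legendre_decomposition assms(2) by blast
  define s where "s = ((-1) ^ p :: real)"
  have "s * s = 1"
    by (simp add: s_def flip: power_mult_distrib)
  moreover have "poly v (-1) + a * s = 0"
    using assms(3) by (simp add: eta s_def poly_L_minus_one)
  ultimately have a: "a = - s * poly v (-1)"
    by algebra
  have "v \<noteq> 0"
    using eta a assms(4) by auto
  then have "0 < poly_inner v v"
    using poly_inner_self_nonneg [of v] poly_inner_self_eq_0_iff [of v] by simp
  then have "0 < 2 * poly_inner v v - (poly v (-1))\<^sup>2 / (2 * (2 * real p + 1))
      - (poly v (-1) + 2 * (s * poly v 1))\<^sup>2 / (2 * real p ^ 2)"
    using p_pos assms(1) inner_lower_bound [OF v] by (intro reduced_objective_pos) (simp_all add: s_def)
  moreover have "a\<^sup>2 = (poly v (-1))\<^sup>2" "(a - 2 * poly v 1)\<^sup>2 = (poly v (-1) + 2 * (s * poly v 1))\<^sup>2"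
    using a \<open>s * s = 1\<close> by algebra+
  ultimately show ?thesis
    using J_S_eq [OF v] eta by simp
qed

end

lemma legendre_data_1: "legendre_data 1
  [:0, 1:]
  [:1/2:]"
  by unfold_locales (simp_all add: power_integral_def All_less_numeral coeff_pCons_numeral)

lemma legendre_data_2: "legendre_data 2
  [:-1/2, 0, 3/2:]
  [:1/2, 3/2:]"
  by unfold_locales (simp_all add: power_integral_def All_less_numeral coeff_pCons_numeral)

lemma legendre_data_3: "legendre_data 3
  [:0, -3/2, 0, 5/2:]
  [:-3/4, 3/2, 15/4:]"
  by unfold_locales (simp_all add: power_integral_def All_less_numeral coeff_pCons_numeral)

lemma legendre_data_4: "legendre_data 4
  [:3/8, 0, -15/4, 0, 35/8:]
  [:-3/4, -15/4, 15/4, 35/4:]"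
  by unfold_locales (simp_all add: power_integral_def All_less_numeral coeff_pCons_numeral)

lemma legendre_data_5: "legendre_data 5
  [:0, 15/8, 0, -35/4, 0, 63/8:]
  [:15/16, -15/4, -105/8, 35/4, 315/16:]"
  by unfold_locales (simp_all add: power_integral_def All_less_numeral coeff_pCons_numeral)

lemma legendre_data_6: "legendre_data 6
  [:-5/16, 0, 105/16, 0, -315/16, 0, 231/16:]
  [:15/16, 105/16, -105/8, -315/8, 315/16, 693/16:]"
  by unfold_locales (simp_all add: power_integral_def All_less_numeral coeff_pCons_numeral)

lemma legendre_data_7: "legendre_data 7
  [:0, -35/16, 0, 315/16, 0, -693/16, 0, 429/16:]
  [:-35/32, 105/16, 945/32, -315/8, -3465/32, 693/16, 3003/32:]"
  by unfold_locales (simp_all add: power_integral_def All_less_numeral coeff_pCons_numeral)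

lemma legendre_data_8: "legendre_data 8
  [:35/128, 0, -315/32, 0, 3465/64, 0, -3003/32, 0, 6435/128:]
  [:-35/32, -315/32, 945/32, 3465/32, -3465/32, -9009/32, 3003/32, 6435/32:]"
  by unfold_locales (simp_all add: power_integral_def All_less_numeral coeff_pCons_numeral)

lemma legendre_data_9: "legendre_data 9
  [:0, 315/128, 0, -1155/32, 0, 9009/64, 0, -6435/32, 0, 12155/128:]
  [:315/256, -315/32, -3465/64, 3465/32, 45045/128, -9009/32, -45045/64, 6435/32, 109395/256:]"
  by unfold_locales (simp_all add: power_integral_def All_less_numeral coeff_pCons_numeral)

lemma legendre_data_10: "legendre_data 10
  [:-63/256, 0, 3465/256, 0, -15015/128, 0, 45045/128, 0, -109395/256, 0, 46189/256:]
  [:315/256, 3465/256, -3465/64, -15015/64, 45045/128, 135135/128, -45045/64, -109395/64, 109395/256, 230945/256:]"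
  by unfold_locales (simp_all add: power_integral_def All_less_numeral coeff_pCons_numeral)

lemma legendre_data_11: "legendre_data 11
  [:0, -693/256, 0, 15015/256, 0, -45045/128, 0, 109395/128, 0, -230945/256, 0, 88179/256:]
  [:-693/512, 3465/256, 45045/512, -15015/64, -225225/256, 135135/128, 765765/256, -109395/64, -2078505/512, 230945/256, 969969/512:]"
  by unfold_locales (simp_all add: power_integral_def All_less_numeral coeff_pCons_numeral)

lemma legendre_data_12: "legendre_data 12
  [:231/1024, 0, -9009/512, 0, 225225/1024, 0, -255255/256, 0, 2078505/1024, 0, -969969/512, 0, 676039/1024:]
  [:-693/512, -9009/512, 45045/512, 225225/512, -225225/256, -765765/256, 765765/256, 2078505/256, -2078505/512, -4849845/512, 969969/512, 2028117/512:]"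
  by unfold_locales (simp_all add: power_integral_def All_less_numeral coeff_pCons_numeral)

lemma legendre_data_13: "legendre_data 13
  [:0, 3003/1024, 0, -45045/512, 0, 765765/1024, 0, -692835/256, 0, 4849845/1024, 0, -2028117/512, 0, 1300075/1024:]
  [:3003/2048, -9009/512, -135135/1024, 225225/512, 3828825/2048, -765765/256, -4849845/512, 2078505/256, 43648605/2048, -4849845/512, -22309287/1024, 2028117/512, 16900975/2048:]"
  by unfold_locales (simp_all add: power_integral_def All_less_numeral coeff_pCons_numeral)

lemma legendre_data_exists:
  assumes "1 \<le> p" "p \<le> 13"
  obtains L K where "legendre_data p L K"
proof -
  have "p = 1 \<or> p = 2 \<or> p = 3 \<or> p = 4 \<or> p = 5 \<or> p = 6 \<or> p = 7 \<or> p = 8 \<or> p = 9 \<or> p = 10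
      \<or> p = 11 \<or> p = 12 \<or> p = 13"
    using assms by presburger
  then show thesis
    using that legendre_data_1 legendre_data_2 legendre_data_3 legendre_data_4 legendre_data_5
      legendre_data_6 legendre_data_7 legendre_data_8 legendre_data_9 legendre_data_10
      legendre_data_11 legendre_data_12 legendre_data_13
    by (elim disjE) blast+
qed

theorem lemma9:
  fixes p :: nat and eta :: "real poly"
  assumes "1 \<le> p" and "p \<le> 13"
    and "degree eta \<le> p"
    and "poly eta (-1) = 0"
    and "eta \<noteq> 0"
  shows "J (S p eta) eta > 0"
proof -
  obtain L K where "legendre_data p L K"
    using legendre_data_exists assms(1,2) by blast
  then interpret legendre_data p L K .
  show ?thesis
    using J_S_pos assms(2-5) by simp
qed

end
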